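(* For positive scores $0<s_1\le\dots\le s_n$ and integer budget $B\ge1$, let $\mathbf h=\mathrm{RAS}(s_1,\dots,s_n;B)$. Then among all optimal allocations $\mathbf a\in\arg\min_{\mathbf a\in\mathcal A}\|\mathbf a\odot\mathbf s\|_\infty$, $\mathbf h$ minimizes the cardinality of the set $\arg\max_{i\in[n]}a_is_i$.
   Context: $\mathcal A=\{\mathbf a\in\mathbb N^n:\|\mathbf a\|_1=B\}$ ($\mathbb N$ includes $0$); $\odot$ is the entrywise product and $\mathbf e_i$ the $i$-th unit vector. RAS$(s_1,\dots,s_n;B)$ with sorted scores $s_1\le\dots\le s_n$: if $B=1$ return $\mathbf e_1$. Otherwise let $\mathbf a=\mathrm{RAS}(s_1,\dots,s_n;B-1)$; let $r=\min\{i:a_i=0\}$ if $a_n=0$, else $r=n$; let $M=\arg\min_{i\in[r]}\|(\mathbf a+\mathbf e_i)\odot\mathbf s\|_\infty$; choose any $j\in M$ minimizing the cardinality of $\arg\max_{i\in[r]}(a_i+e_{j,i})s_i$; return $\mathbf a+\mathbf e_j$. *)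

theory Defs
  imports Complex_Main
begin

text \<open>Vectors in N^n / R^n are functions on nat, indices 1..n.
  Allocations are zero outside {1..n}.\<close>

definition unitv :: "nat \<Rightarrow> nat \<Rightarrow> nat" where
  "unitv j = (\<lambda>i. if i = j then 1 else 0)"

definition allocs :: "nat \<Rightarrow> nat \<Rightarrow> (nat \<Rightarrow> nat) set" where
  "allocs n B = {a. (\<forall>i. i \<notin> {1..n} \<longrightarrow> a i = 0) \<and> (\<Sum>i\<in>{1..n}. a i) = B}"

definition wnorm :: "nat set \<Rightarrow> (nat \<Rightarrow> real) \<Rightarrow> (nat \<Rightarrow> nat) \<Rightarrow> real" where
  "wnorm I s a = Max ((\<lambda>i. \<bar>real (a i) * s i\<bar>) ` I)"

definition argmax_set :: "nat set \<Rightarrow> (nat \<Rightarrow> real) \<Rightarrow> (nat \<Rightarrow> nat) \<Rightarrow> nat set" where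
  "argmax_set I s a = {i \<in> I. \<forall>k\<in>I. real (a k) * s k \<le> real (a i) * s i}"

text \<open>RAS is nondeterministic (ties are broken arbitrarily), so it is modelled as a
  relation: ras s n B h means h is a possible output of RAS(s_1..s_n; B).\<close>
inductive ras :: "(nat \<Rightarrow> real) \<Rightarrow> nat \<Rightarrow> nat \<Rightarrow> (nat \<Rightarrow> nat) \<Rightarrow> bool"
  for s :: "nat \<Rightarrow> real" and n :: nat where
  base: "ras s n 1 (unitv 1)"
| step: "\<lbrakk> ras s n B a;
           r = (if a n = 0 then (LEAST i. 1 \<le> i \<and> a i = 0) else n);
           M = {j \<in> {1..r}. \<forall>k\<in>{1..r}. wnorm {1..n} s (\<lambda>i. a i + unitv j i)
                                         \<le> wnorm {1..n} s (\<lambda>i. a i + unitv k i)};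
           j \<in> M;
           \<forall>k\<in>M. card (argmax_set {1..r} s (\<lambda>i. a i + unitv j i))
                  \<le> card (argmax_set {1..r} s (\<lambda>i. a i + unitv k i)) \<rbrakk>
         \<Longrightarrow> ras s n (Suc B) (\<lambda>i. a i + unitv j i)"

end

theory Submission
  imports Defs
begin

text \<open>Call an allocation \<open>h\<close> levelled if raising any single entry by one would reach the
  current maximum \<open>V = \<parallel>h \<odot> s\<parallel>\<^sub>\<infinity>\<close>; this is an invariant of the greedy step of RAS.
  A levelled \<open>h\<close> is optimal, since an allocation \<open>b\<close> with smaller maximum has \<open>b\<^sub>i \<le> h\<^sub>i\<close>
  everywhere and \<open>b\<^sub>i < h\<^sub>i\<close> at a maximiser of \<open>h\<close>. For an optimal \<open>b\<close> one gets entrywise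
  \<open>b\<^sub>i - h\<^sub>i \<le> [i \<in> argmax b] - [i \<in> argmax h]\<close>; summing over \<open>i\<close> with equal budgets
  yields \<open>|argmax h| \<le> |argmax b|\<close>.\<close>

definition levelled :: "nat set \<Rightarrow> (nat \<Rightarrow> real) \<Rightarrow> (nat \<Rightarrow> nat) \<Rightarrow> bool" where
  "levelled I s h \<longleftrightarrow> (\<forall>i\<in>I. wnorm I s h \<le> (real (h i) + 1) * s i)"

lemma wnorm_ge_entry:
  assumes "finite I" "i \<in> I" "0 \<le> s i"
  shows "real (a i) * s i \<le> wnorm I s a"
proof -
  have "\<bar>real (a i) * s i\<bar> \<le> wnorm I s a"
    unfolding wnorm_def using assms(1,2) by (intro Max_ge finite_imageI imageI)
  then show ?thesis using assms(3) by simp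
qed

lemma wnorm_le:
  assumes "finite I" "I \<noteq> {}" "\<And>i. i \<in> I \<Longrightarrow> \<bar>real (a i) * s i\<bar> \<le> X"
  shows "wnorm I s a \<le> X"
  unfolding wnorm_def using assms by (subst Max_le_iff) auto

lemma wnorm_attained:
  assumes "finite I" "I \<noteq> {}" "\<forall>i\<in>I. 0 \<le> s i"
  obtains i where "i \<in> I" "wnorm I s a = real (a i) * s i"
proof -
  have "wnorm I s a \<in> (\<lambda>i. \<bar>real (a i) * s i\<bar>) ` I"
    unfolding wnorm_def using assms by (intro Max_in) auto
  then show ?thesis using that assms(3) by fastforce
qed

lemma argmax_set_eq_wnorm:
  assumes "finite I" "I \<noteq> {}" "\<forall>i\<in>I. 0 \<le> s i"
  shows "argmax_set I s a = {i\<in>I. real (a i) * s i = wnorm I s a}"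
proof -
  have "i \<in> argmax_set I s a \<longleftrightarrow> real (a i) * s i = wnorm I s a" if "i \<in> I" for i
  proof
    assume "i \<in> argmax_set I s a"
    then have "wnorm I s a \<le> real (a i) * s i"
      using assms unfolding argmax_set_def by (intro wnorm_le) auto
    then show "real (a i) * s i = wnorm I s a"
      using wnorm_ge_entry[of I i s a] assms that by auto
  next
    assume "real (a i) * s i = wnorm I s a"
    then show "i \<in> argmax_set I s a"
      using wnorm_ge_entry[of I _ s a] assms that unfolding argmax_set_def by auto
  qed
  then show ?thesis unfolding argmax_set_def by blast
qed

lemma levelled_entry_le:
  assumes "levelled I s h" "i \<in> I" "0 < s i" "real (b i) * s i < wnorm I s h"
  shows "b i \<le> h i"
proof -
  have "wnorm I s h \<le> (real (h i) + 1) * s i"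
    using assms(1,2) unfolding levelled_def by blast
  then have "real (b i) * s i < (real (h i) + 1) * s i"
    using assms(4) by linarith
  then have "real (b i) < real (h i) + 1"
    using assms(3) by (simp add: mult_less_cancel_right_pos)
  then show ?thesis by linarith
qed

lemma levelled_minimises_wnorm:
  assumes "finite I" "I \<noteq> {}" "\<forall>i\<in>I. 0 < s i" "levelled I s h"
    and "(\<Sum>i\<in>I. b i) = (\<Sum>i\<in>I. h i)"
  shows "wnorm I s h \<le> wnorm I s b"
proof (rule ccontr)
  assume "\<not> ?thesis"
  then have less: "wnorm I s b < wnorm I s h" by simp
  have below: "real (b i) * s i < wnorm I s h" if "i \<in> I" for i
    using wnorm_ge_entry[of I i s b] assms(1,3) that less by force
  obtain i0 where i0: "i0 \<in> I" "wnorm I s h = real (h i0) * s i0"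
    using wnorm_attained assms(1-3) less_imp_le by metis
  have "b i0 < h i0"
    using below[OF i0(1)] i0 assms(3) by (simp add: mult_less_cancel_right_pos)
  moreover have "\<forall>i\<in>I. b i \<le> h i"
    using levelled_entry_le[OF assms(4)] below assms(3) by blast
  ultimately have "(\<Sum>i\<in>I. b i) < (\<Sum>i\<in>I. h i)"
    using i0(1) assms(1) by (intro sum_strict_mono_ex1) auto
  then show False using assms(5) by simp
qed

lemma levelled_entry_diff_le:
  assumes "finite I" "\<forall>i\<in>I. 0 < s i" "levelled I s h" "wnorm I s b = wnorm I s h" "i \<in> I"
  shows "real (b i) - real (h i)
           \<le> of_bool (i \<in> argmax_set I s b) - of_bool (i \<in> argmax_set I s h)"
proof -
  let ?V = "wnorm I s h"
  have si: "0 < s i" using assms by auto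
  have argmax: "argmax_set I s c = {i\<in>I. real (c i) * s i = wnorm I s c}" for c
    using assms(1,2,5) by (intro argmax_set_eq_wnorm) (auto simp: less_imp_le)
  have b_le: "real (b i) * s i \<le> ?V"
    using wnorm_ge_entry[of I i s b] assms si by simp
  have "real (b i) * s i \<le> (real (h i) + 1) * s i"
    using b_le assms(3,5) unfolding levelled_def by fastforce
  then have "b i \<le> h i + 1" using si by (simp add: mult_le_cancel_right_pos)
  moreover have "b i \<le> h i" if "i \<notin> argmax_set I s b"
    using that b_le argmax assms si by (intro levelled_entry_le[OF assms(3)]) auto
  moreover have "b i < h i" if "i \<in> argmax_set I s h" "i \<notin> argmax_set I s b"
  proof -
    have "real (b i) * s i < real (h i) * s i" using that b_le argmax assms(4,5) by auto
    then show ?thesis using si by (simp add: mult_less_cancel_right_pos)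
  qed
  moreover have "b i \<le> h i" if "i \<in> argmax_set I s h"
  proof -
    have "real (b i) * s i \<le> real (h i) * s i" using that b_le argmax by auto
    then show ?thesis using si by (simp add: mult_le_cancel_right_pos)
  qed
  ultimately show ?thesis by (cases "i \<in> argmax_set I s b"; cases "i \<in> argmax_set I s h") auto
qed

lemma levelled_minimises_card_argmax:
  assumes "finite I" "\<forall>i\<in>I. 0 < s i" "levelled I s h"
    and "(\<Sum>i\<in>I. b i) = (\<Sum>i\<in>I. h i)" "wnorm I s b = wnorm I s h"
  shows "card (argmax_set I s h) \<le> card (argmax_set I s b)"
proof -
  have subset: "argmax_set I s c \<subseteq> I" for c unfolding argmax_set_def by auto
  have "0 = (\<Sum>i\<in>I. real (b i) - real (h i))"
    using assms(4) by (simp add: sum_subtractf flip: of_nat_sum)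
  also have "\<dots> \<le> (\<Sum>i\<in>I. of_bool (i \<in> argmax_set I s b) - of_bool (i \<in> argmax_set I s h))"
    using levelled_entry_diff_le[OF assms(1-3,5)] by (intro sum_mono)
  also have "\<dots> = real (card (argmax_set I s b)) - real (card (argmax_set I s h))"
    using assms(1) subset by (simp add: sum_subtractf Int_absorb1 Int_def[symmetric])
  finally show ?thesis by linarith
qed

lemma allocs_add_unitv:
  assumes "a \<in> allocs n B" "j \<in> {1..n}"
  shows "(\<lambda>i. a i + unitv j i) \<in> allocs n (Suc B)"
  using assms unfolding allocs_def by (auto simp: sum.distrib unitv_def)

lemma wnorm_add_unitv_le:
  assumes "finite I" "I \<noteq> {}" "\<forall>i\<in>I. 0 < s i" "levelled I s a" "k \<in> I"
  shows "wnorm I s (\<lambda>i. a i + unitv k i) \<le> (real (a k) + 1) * s k"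
proof (rule wnorm_le[OF assms(1,2)])
  fix i assume i: "i \<in> I"
  show "\<bar>real (a i + unitv k i) * s i\<bar> \<le> (real (a k) + 1) * s k"
  proof (cases "i = k")
    case True
    have "0 < s k" using assms(3,5) by blast
    then show ?thesis using True by (simp add: unitv_def abs_mult)
  next
    case False
    have "0 < s i" using assms(3) i by blast
    moreover have "real (a i) * s i \<le> wnorm I s a"
      using assms(1,3) i by (intro wnorm_ge_entry) auto
    moreover have "wnorm I s a \<le> (real (a k) + 1) * s k"
      using assms(4,5) unfolding levelled_def by blast
    ultimately show ?thesis using False by (simp add: unitv_def)
  qed
qed

lemma ras_prefix_end:
  fixes a :: "nat \<Rightarrow> nat"
  assumes "n \<ge> 1" "r = (if a n = 0 then (LEAST i. 1 \<le> i \<and> a i = 0) else n)"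
  shows "r \<in> {1..n} \<and> (r < n \<longrightarrow> a r = 0)"
proof (cases "a n = 0")
  case True
  let ?P = "\<lambda>i. 1 \<le> i \<and> a i = 0"
  have "r = (LEAST i. ?P i)" using True assms(2) by simp
  moreover have "?P n" using True assms(1) by simp
  ultimately have "?P r" "r \<le> n" using LeastI[of ?P n] Least_le[of ?P n] by auto
  then show ?thesis by auto
qed (use assms in auto)

text \<open>For entries inside the prefix the greedy choice is at least as good as incrementing that
  entry; beyond the prefix, compare with incrementing the zero entry \<open>r\<close>, whose score is smaller.\<close>

lemma levelled_greedy_step:
  assumes pos: "\<forall>i\<in>{1..n}. 0 < s i"
    and mono: "\<forall>i j. 1 \<le> i \<and> i \<le> j \<and> j \<le> n \<longrightarrow> s i \<le> s j"
    and lev: "levelled {1..n} s a"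
    and r: "r \<in> {1..n}" "r < n \<longrightarrow> a r = 0"
    and j: "j \<in> {1..r}"
    and greedy: "\<forall>k\<in>{1..r}. wnorm {1..n} s (\<lambda>i. a i + unitv j i)
                               \<le> wnorm {1..n} s (\<lambda>i. a i + unitv k i)"
  shows "levelled {1..n} s (\<lambda>i. a i + unitv j i)"
  unfolding levelled_def
proof
  fix i assume i: "i \<in> {1..n}"
  have si: "0 < s i" using pos i by blast
  let ?W = "wnorm {1..n} s (\<lambda>i. a i + unitv j i)"
  have incr: "wnorm {1..n} s (\<lambda>i. a i + unitv k i) \<le> (real (a k) + 1) * s k"
    if "k \<in> {1..n}" for k
    using pos lev that by (intro wnorm_add_unitv_le) auto
  have "?W \<le> (real (a i) + 1) * s i"
  proof (cases "i \<le> r")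
    case True
    then show ?thesis using greedy incr[OF i] i by (meson atLeastAtMost_iff order_trans)
  next
    case False
    have "?W \<le> (real (a r) + 1) * s r"
      using greedy incr r by (meson atLeastAtMost_iff order_refl order_trans)
    also have "\<dots> \<le> s i" using False r i mono by auto
    also have "\<dots> \<le> (real (a i) + 1) * s i" using si by simp
    finally show ?thesis .
  qed
  also have "\<dots> \<le> (real (a i + unitv j i) + 1) * s i"
    using si by (intro mult_right_mono) auto
  finally show "?W \<le> (real (a i + unitv j i) + 1) * s i" .
qed

lemma ras_levelled_alloc:
  assumes "n \<ge> 1"
    and pos: "\<forall>i\<in>{1..n}. 0 < s i"
    and mono: "\<forall>i j. 1 \<le> i \<and> i \<le> j \<and> j \<le> n \<longrightarrow> s i \<le> s j"
    and "ras s n B h"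
  shows "h \<in> allocs n B \<and> levelled {1..n} s h"
  using assms(4)
proof (induction rule: ras.induct)
  case base
  have "0 < s 1" using assms(1) pos by simp
  then have "wnorm {1..n} s (unitv 1) \<le> s 1"
    using assms(1) by (intro wnorm_le) (auto simp: unitv_def)
  moreover have "s 1 \<le> (real (unitv 1 i) + 1) * s i" if i: "i \<in> {1..n}" for i
  proof -
    have "s 1 \<le> s i" using mono i by simp
    also have "\<dots> \<le> (real (unitv 1 i) + 1) * s i"
      using pos i mult_right_mono[of 1 "real (unitv 1 i) + 1" "s i"] by simp
    finally show ?thesis .
  qed
  moreover have "unitv 1 \<in> allocs n 1"
    using assms(1) unfolding allocs_def unitv_def by (auto simp: sum.delta)
  ultimately show ?case unfolding levelled_def by (meson order_trans)
next
  case (step B a r M j)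
  have r: "r \<in> {1..n}" "r < n \<longrightarrow> a r = 0"
    using ras_prefix_end[OF assms(1) step.hyps(2)] by auto
  have j: "j \<in> {1..r}"
    and greedy: "\<forall>k\<in>{1..r}. wnorm {1..n} s (\<lambda>i. a i + unitv j i)
                              \<le> wnorm {1..n} s (\<lambda>i. a i + unitv k i)"
    using step.hyps(3,4) by auto
  have "(\<lambda>i. a i + unitv j i) \<in> allocs n (Suc B)"
    using step.IH j r by (intro allocs_add_unitv) auto
  moreover have "levelled {1..n} s (\<lambda>i. a i + unitv j i)"
    using step.IH r j greedy by (intro levelled_greedy_step[OF pos mono]) auto
  ultimately show ?case by simp
qed

theorem lemmaC3:
  fixes s :: "nat \<Rightarrow> real" and n B :: nat and h :: "nat \<Rightarrow> nat"
  assumes "n \<ge> 1"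
    and "\<forall>i\<in>{1..n}. 0 < s i"
    and "\<forall>i j. 1 \<le> i \<and> i \<le> j \<and> j \<le> n \<longrightarrow> s i \<le> s j"
    and "B \<ge> 1"
    and "ras s n B h"
  shows "h \<in> allocs n B
         \<and> (\<forall>a\<in>allocs n B. wnorm {1..n} s h \<le> wnorm {1..n} s a)
         \<and> (\<forall>a\<in>allocs n B. (\<forall>b\<in>allocs n B. wnorm {1..n} s a \<le> wnorm {1..n} s b)
              \<longrightarrow> card (argmax_set {1..n} s h) \<le> card (argmax_set {1..n} s a))"
proof -
  have h: "h \<in> allocs n B" and lev: "levelled {1..n} s h"
    using ras_levelled_alloc[OF assms(1,2,3,5)] by auto
  have budget: "(\<Sum>i\<in>{1..n}. a i) = (\<Sum>i\<in>{1..n}. h i)" if "a \<in> allocs n B" for a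
    using that h unfolding allocs_def by simp
  have opt: "wnorm {1..n} s h \<le> wnorm {1..n} s a" if "a \<in> allocs n B" for a
    using assms(1,2) lev budget[OF that] by (intro levelled_minimises_wnorm) auto
  have "card (argmax_set {1..n} s h) \<le> card (argmax_set {1..n} s a)"
    if a: "a \<in> allocs n B" and a_opt: "\<forall>b\<in>allocs n B. wnorm {1..n} s a \<le> wnorm {1..n} s b" for a
  proof (rule levelled_minimises_card_argmax)
    show "wnorm {1..n} s a = wnorm {1..n} s h"
      using a_opt h opt[OF a] by (simp add: order_antisym)
  qed (use assms(2) lev budget[OF a] in auto)
  then show ?thesis using h opt by blast
qed

end
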